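(* Let $\gamma_1>0$. For every time step $t\ge1$, the first difference $\Delta L_2(t):=L_2(t+1)-L_2(t)$ of $$L_2(t)=\frac{1}{l_a\gamma_1}\operatorname{tr}\!\left[\big(\tilde w_a^{(2)}(t)\big)^T\tilde w_a^{(2)}(t)\right]$$ satisfies $$\Delta L_2(t)\le\frac1{\gamma_1}\Big(-\big(1-l_a\|\phi_a(t)\|^2\|\hat w_c^{(2)}(t)C(t)\|^2\big)\|\hat w_c^{(2)}(t)\phi_c(t)\|^2+4\|\zeta_c(t)\|^2+4\|w_c^{*(2)}\phi_c(t)\|^2+\|\hat w_c^{(2)}(t)C(t)\zeta_a(t)\|^2\Big),$$ where $\zeta_c(t)=\tilde w_c^{(2)}(t)\phi_c(t)$ and $\zeta_a(t)=\tilde w_a^{(2)}(t)\phi_a(t)\in\mathbb R^n$.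
   Context: Setting (action-dependent heuristic dynamic programming with two one-hidden-layer networks). Fix integers $m,n,N_a,N_c\ge1$, a discount factor $\alpha\in(0,1]$ and learning rates $l_c,l_a>0$. Let $\psi(s)=\frac{1-e^{-s}}{1+e^{-s}}$, applied componentwise to vectors (note $\psi'(s)=\tfrac12(1-\psi(s)^2)$). At each integer time $t$ there are a state $x(t)\in\mathbb R^m$ and a scalar reward $r(t)$. Action network: weights $\hat w_a^{(1)}(t)\in\mathbb R^{N_a\times m}$, $\hat w_a^{(2)}(t)\in\mathbb R^{n\times N_a}$; hidden output $\phi_a(t)=\psi(\hat w_a^{(1)}(t)x(t))\in\mathbb R^{N_a}$; control $u(t)=\hat w_a^{(2)}(t)\phi_a(t)\in\mathbb R^n$. Critic network: weights $\hat w_c^{(1)}(t)\in\mathbb R^{N_c\times(m+n)}$, $\hat w_c^{(2)}(t)\in\mathbb R^{1\times N_c}$ (a row vector); input $y(t)=(x(t)^T,u(t)^T)^T\in\mathbb R^{m+n}$; hidden output $\phi_c(t)=\psi(\hat w_c^{(1)}(t)y(t))\in\mathbb R^{N_c}$; output $\hat J(t)=\hat w_c^{(2)}(t)\phi_c(t)$. Critic error $e_c(t)=\alpha\hat J(t)+r(t)-\hat J(t-1)$. Auxiliary quantities: $C(t)\in\mathbb R^{N_c\times n}$ with $C_{ij}(t)=\tfrac12(1-\phi_{c_i}(t)^2)\,(\hat w_c^{(1)}(t))_{i,m+j}$; $a(t)\in\mathbb R^{N_c}$ with $a_i(t)=\tfrac12(1-\phi_{c_i}(t)^2)(\hat w_c^{(2)}(t))_i$;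 $D(t)\in\mathbb R^{N_a\times n}$ with $D_{ij}(t)=\tfrac12(1-\phi_{a_i}(t)^2)(\hat w_a^{(2)}(t))_{ji}$. The weights are updated by gradient descent: $\hat w_c^{(2)}(t+1)=\hat w_c^{(2)}(t)-l_c\alpha e_c(t)\phi_c(t)^T$, $\hat w_c^{(1)}(t+1)=\hat w_c^{(1)}(t)-l_c\alpha e_c(t)\,a(t)y(t)^T$, $\hat w_a^{(2)}(t+1)=\hat w_a^{(2)}(t)-l_a\hat J(t)\,(\hat w_c^{(2)}(t)C(t))^T\phi_a(t)^T$, $\hat w_a^{(1)}(t+1)=\hat w_a^{(1)}(t)-l_a\hat J(t)\,(\hat w_c^{(2)}(t)C(t)D(t)^T)^T x(t)^T$. Fixed (time-independent) "optimal" weights $w_c^{*(1)},w_c^{*(2)},w_a^{*(1)},w_a^{*(2)}$ of the same shapes are given, and the estimation errors are $\tilde w_\bullet(t)=\hat w_\bullet(t)-w_\bullet^{*}$. Assumption 1: $\|w_a^*\|\le w_a^{\max}$ and $\|w_c^*\|\le w_c^{\max}$. Norms are Euclidean for vectors and Frobenius for matrices. *)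

theory Defs
  imports "HOL-Analysis.Analysis"
begin

text \<open>Dimensions m, n, N_a, N_c are the cardinalities of finite index types
  'm, 'n, 'na, 'nc. The critic input index set {1..m+n} is the sum type 'm + 'n
  (Inl i = i-th state coordinate, Inr j = coordinate m+j).\<close>

definition psi :: "real \<Rightarrow> real" where
  "psi s = (1 - exp (- s)) / (1 + exp (- s))"

definition vpsi :: "real^'k \<Rightarrow> real^'k" where
  "vpsi v = (\<chi> i. psi (v $ i))"

definition outer :: "real^'a \<Rightarrow> real^'b \<Rightarrow> real^'b^'a" where
  "outer v w = (\<chi> i k. v $ i * w $ k)"

definition cinput :: "real^'m \<Rightarrow> real^'n \<Rightarrow> real^('m + 'n)" where
  "cinput x u = (\<chi> k. case k of Inl i \<Rightarrow> x $ i | Inr j \<Rightarrow> u $ j)"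

definition phi_a :: "real^'m^'na \<Rightarrow> real^'m \<Rightarrow> real^'na" where
  "phi_a wa1 x = vpsi (wa1 *v x)"

definition ctrl :: "real^'m^'na \<Rightarrow> real^'na^'n \<Rightarrow> real^'m \<Rightarrow> real^'n" where
  "ctrl wa1 wa2 x = wa2 *v phi_a wa1 x"

definition phi_c :: "real^('m+'n)^'nc \<Rightarrow> real^'m^'na \<Rightarrow> real^'na^'n \<Rightarrow> real^'m \<Rightarrow> real^'nc" where
  "phi_c wc1 wa1 wa2 x = vpsi (wc1 *v cinput x (ctrl wa1 wa2 x))"

definition C_mat :: "real^('m::finite+'n::finite)^'nc \<Rightarrow> real^'nc \<Rightarrow> real^'n^'nc" where
  "C_mat wc1 phic = (\<chi> i j. (1/2) * (1 - (phic $ i)^2) * (wc1 $ i $ Inr j))"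

definition a_vec :: "real^'nc \<Rightarrow> real^'nc \<Rightarrow> real^'nc" where
  "a_vec wc2 phic = (\<chi> i. (1/2) * (1 - (phic $ i)^2) * (wc2 $ i))"

definition D_mat :: "real^'na^'n \<Rightarrow> real^'na \<Rightarrow> real^'n^'na" where
  "D_mat wa2 phia = (\<chi> i j. (1/2) * (1 - (phia $ i)^2) * (wa2 $ j $ i))"

text \<open>The row vector w_c^(2) is represented as a vector in R^{N_c}; products with it
  from the left are dot products / vector-matrix products.\<close>
definition adhdp_dynamics ::
  "real \<Rightarrow> real \<Rightarrow> real \<Rightarrow> (int \<Rightarrow> real^'m) \<Rightarrow> (int \<Rightarrow> real)
   \<Rightarrow> (int \<Rightarrow> real^('m+'n)^'nc) \<Rightarrow> (int \<Rightarrow> real^'nc)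
   \<Rightarrow> (int \<Rightarrow> real^'m^'na) \<Rightarrow> (int \<Rightarrow> real^'na^'n) \<Rightarrow> bool" where
  "adhdp_dynamics \<alpha> lc la x r wc1 wc2 wa1 wa2 \<longleftrightarrow>
    (\<forall>t::int.
      let phia = phi_a (wa1 t) (x t);
          u = ctrl (wa1 t) (wa2 t) (x t);
          y = cinput (x t) u;
          phic = phi_c (wc1 t) (wa1 t) (wa2 t) (x t);
          J = wc2 t \<bullet> phic;
          Jprev = wc2 (t - 1) \<bullet> phi_c (wc1 (t - 1)) (wa1 (t - 1)) (wa2 (t - 1)) (x (t - 1));
          ec = \<alpha> * J + r t - Jprev;
          C = C_mat (wc1 t) phic;
          a = a_vec (wc2 t) phic;
          D = D_mat (wa2 t) phia;
          v = wc2 t v* C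
      in wc2 (t + 1) = wc2 t - (lc * \<alpha> * ec) *\<^sub>R phic
       \<and> wc1 (t + 1) = wc1 t - (lc * \<alpha> * ec) *\<^sub>R outer a y
       \<and> wa2 (t + 1) = wa2 t - (la * J) *\<^sub>R outer v phia
       \<and> wa1 (t + 1) = wa1 t - (la * J) *\<^sub>R outer (v v* transpose D) (x t))"

definition lyap_L2 :: "real \<Rightarrow> real \<Rightarrow> real^'na^'n \<Rightarrow> (int \<Rightarrow> real^'na^'n) \<Rightarrow> int \<Rightarrow> real" where
  "lyap_L2 la \<gamma>1 wa2s wa2 t =
     (1 / (la * \<gamma>1)) * trace (transpose (wa2 t - wa2s) ** (wa2 t - wa2s))"

end

theory Submission
  imports Defs
begin

text \<open>The update of \<open>w\<^sub>a\<^sup>(\<^sup>2\<^sup>)\<close> is the rank-one correction \<open>-l\<^sub>a J v \<phi>\<^sub>a\<^sup>T\<close> with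
  \<open>J = \<hat>w\<^sub>c\<^sup>(\<^sup>2\<^sup>)\<phi>\<^sub>c\<close> and \<open>v = \<hat>w\<^sub>c\<^sup>(\<^sup>2\<^sup>)C\<close>. Since \<open>L\<^sub>2\<close> is a squared Frobenius norm, expanding it
  gives exactly \<open>\<gamma>\<^sub>1 \<Delta>L\<^sub>2 = -2 J s + l\<^sub>a \<parallel>\<phi>\<^sub>a\<parallel>\<^sup>2\<parallel>v\<parallel>\<^sup>2 J\<^sup>2\<close> with \<open>s = v \<zeta>\<^sub>a\<close>.
  Then \<open>-2Js \<le> J\<^sup>2 + s\<^sup>2\<close>, and \<open>J = \<zeta>\<^sub>c + w\<^sub>c\<^sup>*\<^sup>(\<^sup>2\<^sup>)\<phi>\<^sub>c\<close> gives \<open>2J\<^sup>2 \<le> 4\<zeta>\<^sub>c\<^sup>2 + 4(w\<^sub>c\<^sup>*\<^sup>(\<^sup>2\<^sup>)\<phi>\<^sub>c)\<^sup>2\<close>.\<close>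

lemma trace_transpose_mult_self:
  fixes A :: "real^'k::finite^'j::finite"
  shows "trace (transpose A ** A) = (norm A)\<^sup>2"
proof -
  have "trace (transpose A ** A) = (\<Sum>k\<in>UNIV. \<Sum>i\<in>UNIV. A $ i $ k * A $ i $ k)"
    unfolding trace_def matrix_matrix_mult_def transpose_def by simp
  also have "\<dots> = (\<Sum>i\<in>UNIV. A $ i \<bullet> A $ i)"
    unfolding inner_vec_def by (subst sum.swap) simp
  finally show ?thesis
    by (simp add: power2_norm_eq_inner inner_vec_def)
qed

lemma norm_diff_scaleR_squared:
  fixes W X :: "'a::real_inner"
  shows "(norm (W - c *\<^sub>R X))\<^sup>2 = (norm W)\<^sup>2 - 2 * c * (W \<bullet> X) + c\<^sup>2 * (norm X)\<^sup>2"
  unfolding power2_norm_eq_inner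
  by (simp add: inner_diff_left inner_diff_right inner_commute[of X W] power2_eq_square
      right_diff_distrib)

lemma inner_outer:
  fixes W :: "real^'k::finite^'j::finite"
  shows "W \<bullet> outer v p = v \<bullet> (W *v p)"
  unfolding outer_def inner_vec_def matrix_vector_mult_def
  by (simp add: sum_distrib_left mult_ac)

lemma norm_outer:
  fixes v :: "real^'j::finite" and p :: "real^'k::finite"
  shows "norm (outer v p) = norm v * norm p"
proof -
  have "(norm (outer v p))\<^sup>2 = (norm v * norm p)\<^sup>2"
    unfolding outer_def power2_norm_eq_inner power_mult_distrib inner_vec_def
    by (simp add: sum_product mult_ac)
  then show ?thesis
    by simp
qed

lemma adhdp_dynamics_wa2_step:
  assumes "adhdp_dynamics \<alpha> lc la x r wc1 wc2 wa1 wa2"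
  shows "wa2 (t + 1) = wa2 t
    - (la * (wc2 t \<bullet> phi_c (wc1 t) (wa1 t) (wa2 t) (x t)))
      *\<^sub>R outer (wc2 t v* C_mat (wc1 t) (phi_c (wc1 t) (wa1 t) (wa2 t) (x t))) (phi_a (wa1 t) (x t))"
  using assms unfolding adhdp_dynamics_def Let_def
  by (auto simp: ctrl_def phi_c_def)

lemma cross_term_bound:
  fixes J s zc b c :: real
  assumes "J = zc + b"
  shows "- 2 * J * s + c * J\<^sup>2 \<le> - (1 - c) * J\<^sup>2 + 4 * zc\<^sup>2 + 4 * b\<^sup>2 + s\<^sup>2"
proof -
  have "- 2 * J * s \<le> J\<^sup>2 + s\<^sup>2"
    using zero_le_power2[of "J + s"] by (simp add: power2_sum)
  moreover have "2 * J\<^sup>2 \<le> 4 * zc\<^sup>2 + 4 * b\<^sup>2"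
    using assms zero_le_power2[of "zc - b"] by (simp add: power2_sum power2_diff)
  ultimately show ?thesis
    by (simp add: algebra_simps)
qed

theorem lemma2:
  fixes \<alpha> lc la \<gamma>1 wamax wcmax :: real
    and x :: "int \<Rightarrow> real^'m" and r :: "int \<Rightarrow> real"
    and wc1 :: "int \<Rightarrow> real^('m::finite+'n::finite)^'nc" and wc2 :: "int \<Rightarrow> real^'nc"
    and wa1 :: "int \<Rightarrow> real^'m^'na" and wa2 :: "int \<Rightarrow> real^'na^'n"
    and wc1s :: "real^('m+'n)^'nc" and wc2s :: "real^'nc"
    and wa1s :: "real^'m^'na" and wa2s :: "real^'na^'n"
    and t :: int
  assumes "0 < \<alpha>" and "\<alpha> \<le> 1" and "0 < lc" and "0 < la"
    and "0 < \<gamma>1"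
    and "adhdp_dynamics \<alpha> lc la x r wc1 wc2 wa1 wa2"
    and "sqrt ((norm wa1s)^2 + (norm wa2s)^2) \<le> wamax"
    and "sqrt ((norm wc1s)^2 + (norm wc2s)^2) \<le> wcmax"
    and "1 \<le> t"
  shows
    "let phia = phi_a (wa1 t) (x t);
         phic = phi_c (wc1 t) (wa1 t) (wa2 t) (x t);
         C = C_mat (wc1 t) phic;
         v = wc2 t v* C;
         \<zeta>c = (wc2 t - wc2s) \<bullet> phic;
         \<zeta>a = (wa2 t - wa2s) *v phia
     in lyap_L2 la \<gamma>1 wa2s wa2 (t + 1) - lyap_L2 la \<gamma>1 wa2s wa2 t
        \<le> (1 / \<gamma>1) * ( - (1 - la * (norm phia)^2 * (norm v)^2) * (norm (wc2 t \<bullet> phic))^2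
                       + 4 * (norm \<zeta>c)^2 + 4 * (norm (wc2s \<bullet> phic))^2
                       + (norm (v \<bullet> \<zeta>a))^2)"
proof -
  define phia where "phia = phi_a (wa1 t) (x t)"
  define phic where "phic = phi_c (wc1 t) (wa1 t) (wa2 t) (x t)"
  define v where "v = wc2 t v* C_mat (wc1 t) phic"
  define J where "J = wc2 t \<bullet> phic"
  define s where "s = v \<bullet> ((wa2 t - wa2s) *v phia)"
  have "wa2 (t + 1) - wa2s = (wa2 t - wa2s) - (la * J) *\<^sub>R outer v phia"
    using adhdp_dynamics_wa2_step[OF assms(6), of t]
    by (simp add: phia_def phic_def v_def J_def)
  then have norm_step: "(norm (wa2 (t + 1) - wa2s))\<^sup>2
      = (norm (wa2 t - wa2s))\<^sup>2 - 2 * (la * J) * s + (la * J)\<^sup>2 * (norm v * norm phia)\<^sup>2"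
    by (simp only: norm_diff_scaleR_squared inner_outer norm_outer s_def)
  have "lyap_L2 la \<gamma>1 wa2s wa2 (t + 1) - lyap_L2 la \<gamma>1 wa2s wa2 t
      = (1 / \<gamma>1) * (- 2 * J * s + la * (norm phia)\<^sup>2 * (norm v)\<^sup>2 * J\<^sup>2)"
    using assms(4,5) unfolding lyap_L2_def trace_transpose_mult_self norm_step
    by (simp add: field_simps power2_eq_square)
  also have "\<dots> \<le> (1 / \<gamma>1) * (- (1 - la * (norm phia)\<^sup>2 * (norm v)\<^sup>2) * J\<^sup>2
      + 4 * ((wc2 t - wc2s) \<bullet> phic)\<^sup>2 + 4 * (wc2s \<bullet> phic)\<^sup>2 + s\<^sup>2)"
    using assms(5) cross_term_bound[of J "(wc2 t - wc2s) \<bullet> phic" "wc2s \<bullet> phic"]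
    by (intro mult_left_mono) (auto simp: J_def inner_diff_left)
  finally show ?thesis
    by (simp add: Let_def phia_def phic_def v_def J_def s_def)
qed
end
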